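(* Consider the resilient constrained consensus algorithm described in the context, with $\bigcap_{i\in\mathcal H}\mathcal X_i=\{x^*\}$. For all times $t$, $$\sum_{i\in\mathcal H}\psi_i(t)\le 4|\mathcal H|^3V(t),$$ where $$\psi_i(t)=\Big\|\sum_{j\in\mathcal M_i(t)}(x_{ji}(t)-x_i(t))\Big\|^2\quad\text{and}\quad V(t)=\sum_{i\in\mathcal H}\|x_i(t)-x^*\|^2.$$
   Context: Setting: There are $n$ agents $\mathcal N=\{1,\dots,n\}$ on a complete communication graph. A known integer $f\ge0$ is given. The agents are partitioned into normal agents $\mathcal H$ and Byzantine agents $\mathcal F$ with $|\mathcal F|\le f$. Each $i\in\mathcal H$ has a closed convex $\mathcal X_i\subseteq\mathbb R^m$. Algorithm: normal agent $i$ has state $x_i(t)\in\mathbb R^m$ and at time $t$ receives $x_{ji}(t)$ from each $j\ne i$. If $j\in\mathcal H$, then $x_{ji}(t)=x_j(t)$. If $j\in\mathcal F$, the value is arbitrary and may differ per recipient. Agent $i$ discards the $f$ received vectors with largest $\|x_i(t)-x_{ji}(t)\|$, with ties broken arbitrarily. The remaining $n-f-1$ senders form $\mathcal M_i(t)\subseteq\mathcal N\setminus\{i\}$. The update is $$x_i(t+1)=\mathrm P_{\mathcal X_i}\Big[x_i(t)+\alpha\sum_{j\in\mathcal M_i(t)}(x_{ji}(t)-x_i(t))\Big],$$ with $\alpha>0$ and $\mathrm P_{\mathcal C}$ the Euclidean projection. *)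

theory Defs
  imports "HOL-Analysis.Analysis"
begin

end

theory Submission
  imports Defs
begin

(* Every message an honest agent i keeps is at least as close to x_i as some honest neighbour:
   an honest sender gives itself as witness, and a Byzantine one can only be kept if the f
   discarded senders include an honest agent, since there are at most f Byzantine agents.
   Hence each kept difference is at most 2 sqrt V, at most |H| of them are kept, and squaring
   and summing over the honest agents gives 4 |H|^3 V. *)

lemma discarded_meets_honest:
  assumes "finite A" "C \<subseteq> A" "j \<in> A - H" "j \<notin> C" "card (A - H) \<le> card C"
  shows "C \<inter> H \<noteq> {}"
proof
  assume "C \<inter> H = {}"
  with assms(2,3,4) have "C \<subset> A - H" by blast
  then have "card C < card (A - H)"
    using assms(1) by (intro psubset_card_mono) auto
  with assms(5) show False by simp
qed

lemma card_kept_less_card_honest: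
  assumes "finite A" "H \<subseteq> A" "i \<in> H" "M \<subseteq> A - {i}"
    and "card (A - H) \<le> card (A - {i} - M)"
  shows "card M < card H"
proof -
  have "finite M" "i \<in> A" using assms(1-4) by (auto intro: finite_subset)
  have "card (A - {i} - M) = card A - 1 - card M"
    using assms \<open>finite M\<close> \<open>i \<in> A\<close> by (simp add: card_Diff_subset)
  moreover have "card (A - H) = card A - card H"
    using assms(1,2) by (simp add: card_Diff_subset finite_subset)
  moreover have "card M \<le> card A - 1"
    using card_mono[OF _ assms(4)] assms(1) \<open>i \<in> A\<close> by simp
  moreover have "0 < card H" "card H \<le> card A"
    using assms(1-3) card_mono finite_subset card_gt_0_iff by blast+
  ultimately show ?thesis using assms(5) by linarith
qed

lemma kept_message_near_honest:
  fixes y m :: "'a \<Rightarrow> 'v::real_normed_vector"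
  assumes "finite A" "H \<subseteq> A" "i \<in> H" "M \<subseteq> A - {i}"
    and card_discarded: "card (A - H) \<le> card (A - {i} - M)"
    and honest: "\<forall>k\<in>H - {i}. m k = y k"
    and nearest: "\<forall>j\<in>M. \<forall>k\<in>A - {i} - M. norm (y i - m j) \<le> norm (y i - m k)"
    and "j \<in> M"
  shows "\<exists>k\<in>H. norm (m j - y i) \<le> norm (y k - y i)"
proof (cases "j \<in> H")
  case True
  then show ?thesis using honest assms(4,8) by fastforce
next
  case False
  then have "j \<in> A - H" "j \<notin> A - {i} - M" using assms(4,8) by auto
  then obtain k where k: "k \<in> A - {i} - M" "k \<in> H"
    using discarded_meets_honest[OF assms(1) _ _ _ card_discarded] by blast
  then have "norm (m j - y i) \<le> norm (y i - m k)"
    using nearest assms(8) by (metis norm_minus_commute)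
  also have "\<dots> = norm (y k - y i)"
    using honest k by (simp add: norm_minus_commute)
  finally show ?thesis using k(2) by blast
qed

lemma norm_sum_kept_differences_sq_le:
  fixes y m :: "'a \<Rightarrow> 'v::real_normed_vector"
  assumes "finite A" "H \<subseteq> A" "i \<in> H" "M \<subseteq> A - {i}"
    and "card (A - H) \<le> card (A - {i} - M)"
    and "\<forall>k\<in>H - {i}. m k = y k"
    and "\<forall>j\<in>M. \<forall>k\<in>A - {i} - M. norm (y i - m j) \<le> norm (y i - m k)"
  shows "(norm (\<Sum>j\<in>M. m j - y i))\<^sup>2 \<le> 4 * real (card H) ^ 2 * (\<Sum>k\<in>H. (norm (y k - c))\<^sup>2)"
proof -
  let ?L = "L2_set (\<lambda>k. norm (y k - c)) H"
  have "finite H" using assms(1,2) finite_subset by blast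
  have near: "norm (y k - c) \<le> ?L" if "k \<in> H" for k
    using member_le_L2_set[OF \<open>finite H\<close> that] .
  have kept: "norm (m j - y i) \<le> 2 * ?L" if j: "j \<in> M" for j
  proof -
    obtain k where "k \<in> H" and "norm (m j - y i) \<le> norm (y k - y i)"
      using kept_message_near_honest[OF assms j] by blast
    moreover have "norm (y k - y i) \<le> norm (y k - c) + norm (y i - c)"
      by (rule norm_diff_triangle_le[OF order_refl]) (simp add: norm_minus_commute)
    ultimately show ?thesis using near[of k] near[OF assms(3)] by linarith
  qed
  have "norm (\<Sum>j\<in>M. m j - y i) \<le> (\<Sum>j\<in>M. norm (m j - y i))"
    by (rule norm_sum)
  also have "\<dots> \<le> real (card M) * (2 * ?L)"
    using sum_mono[of M _ "\<lambda>_. 2 * ?L"] kept by simp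
  also have "\<dots> \<le> real (card H) * (2 * ?L)"
    using card_kept_less_card_honest[OF assms(1-5)] by (intro mult_right_mono) auto
  finally have "(norm (\<Sum>j\<in>M. m j - y i))\<^sup>2 \<le> (real (card H) * (2 * ?L))\<^sup>2"
    by (intro power_mono) auto
  also have "\<dots> = 4 * real (card H) ^ 2 * (\<Sum>k\<in>H. (norm (y k - c))\<^sup>2)"
    by (simp add: L2_set_def power_mult_distrib sum_nonneg)
  finally show ?thesis .
qed

theorem lemma4:
  fixes n f :: nat
    and H :: "nat set"
    and X :: "nat \<Rightarrow> (real^'m) set"
    and alpha :: real
    and xstar :: "real^'m"
    and x :: "nat \<Rightarrow> nat \<Rightarrow> real^'m"
    and msg :: "nat \<Rightarrow> nat \<Rightarrow> nat \<Rightarrow> real^'m"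
    and M :: "nat \<Rightarrow> nat \<Rightarrow> nat set"
    and t :: nat
  assumes agents: "H \<subseteq> {..<n}"
    and byz: "card ({..<n} - H) \<le> f"
    and Xcc: "\<forall>i\<in>H. closed (X i) \<and> convex (X i)"
    and inter: "(\<Inter>i\<in>H. X i) = {xstar}"
    and alpha: "alpha > 0"
    and honest_msg: "\<forall>s. \<forall>i\<in>H. \<forall>j\<in>H - {i}. msg s j i = x s j"
    and filter: "\<forall>s. \<forall>i\<in>H. M s i \<subseteq> {..<n} - {i}
                   \<and> card ({..<n} - {i} - M s i) = f
                   \<and> (\<forall>j\<in>M s i. \<forall>k\<in>{..<n} - {i} - M s i.
                        norm (x s i - msg s j i) \<le> norm (x s i - msg s k i))"
    and update: "\<forall>s. \<forall>i\<in>H. x (Suc s) i =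
                   closest_point (X i) (x s i + alpha *\<^sub>R (\<Sum>j\<in>M s i. msg s j i - x s i))"
  shows "(\<Sum>i\<in>H. (norm (\<Sum>j\<in>M t i. msg t j i - x t i))\<^sup>2)
           \<le> 4 * real (card H) ^ 3 * (\<Sum>i\<in>H. (norm (x t i - xstar))\<^sup>2)"
proof -
  let ?V = "\<Sum>k\<in>H. (norm (x t k - xstar))\<^sup>2"
  have "(norm (\<Sum>j\<in>M t i. msg t j i - x t i))\<^sup>2 \<le> 4 * real (card H) ^ 2 * ?V"
    if "i \<in> H" for i
    using that filter honest_msg byz
    by (intro norm_sum_kept_differences_sq_le[OF _ agents, where m = "\<lambda>j. msg t j i"]) auto
  then have "(\<Sum>i\<in>H. (norm (\<Sum>j\<in>M t i. msg t j i - x t i))\<^sup>2)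
               \<le> (\<Sum>i\<in>H. 4 * real (card H) ^ 2 * ?V)"
    by (rule sum_mono)
  also have "\<dots> = 4 * real (card H) ^ 3 * ?V"
    by (simp add: power_numeral_reduce)
  finally show ?thesis .
qed

end
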